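(* For every metric space $M$, $\dim_{\mathrm{MST}}(M)=\dim_{\mathrm{Box}}(M)$.
   Context: A minimal spanning tree (MST) on a finite set of points in a metric space is a spanning tree of the complete graph on those points that minimizes the sum of the edge lengths; for an edge $e$, $\|e\|$ is the distance between its endpoints, and for a tree $T$ and $d\ge 0$, $E_d(T)=\sum_{e\in T}\|e\|^d$. The MST dimension is \[ \dim_{\mathrm{MST}}(M):=\inf\{d\ge 0:\ \exists C<\infty \text{ such that } E_d(T)\le C \text{ for every MST } T \text{ on any finite set of distinct points of } M\}, \] with $\inf\emptyset=\infty$. For $\epsilon>0$ let $N(\epsilon)\in\{0,1,2,\dots\}\cup\{\infty\}$ be the maximal number of pairwise disjoint open balls of radius $\epsilon$ centered at points of $M$. The upper box dimension is \[ \dim_{\mathrm{Box}}(M):=\limsup_{\epsilon\to0}\frac{\log N(\epsilon)}{\log(1/\epsilon)}. \] *)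

theory Defs
  imports "HOL-Analysis.Analysis"
begin

definition edge_len :: "'a::metric_space set \<Rightarrow> real" where
  "edge_len e = (THE d. \<exists>x y. e = {x, y} \<and> d = dist x y)"

definition edge_rel :: "'a set set \<Rightarrow> ('a \<times> 'a) set" where
  "edge_rel T = {(u, v). {u, v} \<in> T}"

text \<open>A spanning tree of the complete graph on the vertex set P: a set of edges between
  distinct points of P which is connected on P and acyclic (no edge lies on a cycle,
  i.e. the endpoints of an edge e are not joined by a path in T - {e}).\<close>

definition is_spanning_tree :: "'a set \<Rightarrow> 'a set set \<Rightarrow> bool" where
  "is_spanning_tree P T \<longleftrightarrow>
     T \<subseteq> {{x, y} | x y. x \<in> P \<and> y \<in> P \<and> x \<noteq> y} \<and>
     (\<forall>x\<in>P. \<forall>y\<in>P. (x, y) \<in> (edge_rel T)\<^sup>*) \<and>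
     (\<forall>e\<in>T. \<forall>x y. e = {x, y} \<longrightarrow> (x, y) \<notin> (edge_rel (T - {e}))\<^sup>*)"

definition tree_weight :: "'a::metric_space set set \<Rightarrow> real" where
  "tree_weight T = (\<Sum>e\<in>T. edge_len e)"

definition is_MST :: "'a::metric_space set \<Rightarrow> 'a set set \<Rightarrow> bool" where
  "is_MST P T \<longleftrightarrow> is_spanning_tree P T \<and>
     (\<forall>T'. is_spanning_tree P T' \<longrightarrow> tree_weight T \<le> tree_weight T')"

definition E_pow :: "real \<Rightarrow> 'a::metric_space set set \<Rightarrow> real" where
  "E_pow d T = (\<Sum>e\<in>T. edge_len e powr d)"

text \<open>MST dimension of a metric space S (a subset of a metric space type, with the
  induced metric); Inf of the empty set of ereals is \<infinity>.\<close>

definition dim_MST :: "'a::metric_space set \<Rightarrow> ereal" where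
  "dim_MST S = Inf (ereal ` {d. d \<ge> 0 \<and> (\<exists>C. \<forall>P T. finite P \<and> P \<subseteq> S \<and> is_MST P T \<longrightarrow> E_pow d T \<le> C)})"

text \<open>Maximal number of pairwise disjoint open balls of radius \<open>\<epsilon>\<close> centred in S
  (\<infinity> if there is no maximum).\<close>

definition packing_number :: "'a::metric_space set \<Rightarrow> real \<Rightarrow> enat" where
  "packing_number S \<epsilon> = Sup {enat (card A) | A. finite A \<and> A \<subseteq> S \<and>
       (\<forall>x\<in>A. \<forall>y\<in>A. x \<noteq> y \<longrightarrow> ball x \<epsilon> \<inter> ball y \<epsilon> = {})}"

definition box_ratio :: "'a::metric_space set \<Rightarrow> real \<Rightarrow> ereal" where
  "box_ratio S \<epsilon> = (case packing_number S \<epsilon> of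
       \<infinity> \<Rightarrow> \<infinity>
     | enat n \<Rightarrow> ereal (ln (real n) / ln (1 / \<epsilon>)))"

definition dim_Box :: "'a::metric_space set \<Rightarrow> ereal" where
  "dim_Box S = Limsup (at_right 0) (box_ratio S)"

end

theory Submission
  imports Defs "HOL-Real_Asymp.Real_Asymp"
begin

text \<open>If every MST on a finite subset of \<open>S\<close> has \<open>E\<^sub>d \<le> C\<close>, an MST on an \<open>\<epsilon>\<close>-packing \<open>A\<close>
  has \<open>card A - 1\<close> edges, all of length \<open>\<ge> \<epsilon>\<close>; hence \<open>N(\<epsilon>) \<le> C \<epsilon>\<^sup>-\<^sup>d + 1\<close> and the box
  dimension is at most \<open>d\<close>.
  Conversely, let \<open>N(\<epsilon>) \<le> \<epsilon>\<^sup>-\<^sup>q\<close> for small \<open>\<epsilon>\<close>; then \<open>S\<close> is bounded. Deleting the \<open>k\<close>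
  edges of length \<open>\<ge> r\<close> from an MST leaves \<open>k + 1\<close> components, and by the cut property points
  of different components are at distance \<open>\<ge> r\<close>. So \<open>k \<le> N(r / 2) \<le> A r\<^sup>-\<^sup>q\<close>, the \<open>j\<close>-th
  longest edge has length \<open>\<le> (A / j)\<^sup>1\<^sup>/\<^sup>q\<close>, and \<open>E\<^sub>d \<le> A\<^sup>d\<^sup>/\<^sup>q \<zeta>(d / q)\<close> for every \<open>d > q\<close>.\<close>

section \<open>Walks in sets of edges\<close>

abbreviation complete_edges :: "'a set \<Rightarrow> 'a set set" where
  "complete_edges P \<equiv> {{x, y} | x y. x \<in> P \<and> y \<in> P \<and> x \<noteq> y}"

abbreviation joined :: "'a set set \<Rightarrow> 'a \<Rightarrow> 'a \<Rightarrow> bool" where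
  "joined G u v \<equiv> (u, v) \<in> (edge_rel G)\<^sup>*"

definition connects :: "'a set set \<Rightarrow> 'a set \<Rightarrow> bool" where
  "connects G P \<longleftrightarrow> (\<forall>x\<in>P. \<forall>y\<in>P. joined G x y)"

lemma edge_len_doubleton [simp]: "edge_len {x, y} = dist x y"
  unfolding edge_len_def
proof (rule the_equality)
  fix d assume "\<exists>x' y'. {x, y} = {x', y'} \<and> d = dist x' y'"
  then show "d = dist x y" by (metis doubleton_eq_iff dist_commute)
qed blast

lemma finite_complete_edges: "finite P \<Longrightarrow> finite (complete_edges P)"
  by (rule finite_subset[of _ "(\<lambda>(x, y). {x, y}) ` (P \<times> P)"]) auto

lemma joined_sym: "joined G u v \<Longrightarrow> joined G v u"
proof -
  have "sym (edge_rel G)" unfolding edge_rel_def sym_def by (auto simp: insert_commute)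
  then show "joined G u v \<Longrightarrow> joined G v u" by (meson sym_rtrancl symD)
qed

lemma joined_empty [simp]: "joined {} u v \<longleftrightarrow> u = v"
  unfolding edge_rel_def by simp

lemma joined_edge: "{u, v} \<in> G \<Longrightarrow> joined G u v"
  unfolding edge_rel_def by auto

lemma joined_mono: "joined G u v \<Longrightarrow> G \<subseteq> H \<Longrightarrow> joined H u v"
proof -
  assume "G \<subseteq> H"
  then have "edge_rel G \<subseteq> edge_rel H" unfolding edge_rel_def by auto
  then show "joined G u v \<Longrightarrow> joined H u v" using rtrancl_mono by blast
qed

lemma joined_subgraphI:
  assumes "\<And>u v. {u, v} \<in> G \<Longrightarrow> joined H u v" and "joined G x y"
  shows "joined H x y"
proof -
  have "edge_rel G \<subseteq> (edge_rel H)\<^sup>*" using assms(1) unfolding edge_rel_def by auto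
  then have "(edge_rel G)\<^sup>* \<subseteq> (edge_rel H)\<^sup>*" using rtrancl_subset_rtrancl by blast
  then show ?thesis using assms(2) by blast
qed

lemma joined_Diff_edge:
  assumes "joined G u v"
  shows "joined (G - {{x, y}}) u v \<or> joined (G - {{x, y}}) u x \<or> joined (G - {{x, y}}) u y"
  using assms
proof (induction rule: rtrancl_induct)
  case (step v w)
  then have "{v, w} \<in> G" unfolding edge_rel_def by auto
  show ?case
  proof (cases "{v, w} = {x, y}")
    case True
    then show ?thesis using step.IH by (metis doubleton_eq_iff)
  next
    case False
    then have "joined (G - {{x, y}}) v w" using \<open>{v, w} \<in> G\<close> by (intro joined_edge) simp
    then show ?thesis using step.IH by (meson rtrancl_trans)
  qed
qed simp

text \<open>After the deletion, \<open>a\<close> and \<open>b\<close> are still joined to different ends of the edge.\<close>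

lemma joined_iff_across_edge:
  assumes "joined G a b" and sep: "\<not> joined (G - {{x, y}}) a b" and H: "G - {{x, y}} \<subseteq> H"
  shows "joined H a b \<longleftrightarrow> joined H x y"
proof -
  let ?G' = "G - {{x, y}}"
  have a: "joined ?G' a x \<or> joined ?G' a y"
    using joined_Diff_edge[OF assms(1), of x y] sep by (elim disjE) simp_all
  have "\<not> joined ?G' b a" using sep joined_sym by metis
  then have b: "joined ?G' b x \<or> joined ?G' b y"
    using joined_Diff_edge[OF joined_sym[OF assms(1)], of x y] by (elim disjE) simp_all
  have "\<not> (joined ?G' a z \<and> joined ?G' b z)" for z
    using sep by (metis joined_sym rtrancl_trans)
  with a b have "joined ?G' a x \<and> joined ?G' b y \<or> joined ?G' a y \<and> joined ?G' b x"
    by metis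
  then have "joined H a x \<and> joined H b y \<or> joined H a y \<and> joined H b x"
    using joined_mono[OF _ H] by (elim disjE conjE) simp_all
  then show ?thesis by (metis joined_sym rtrancl_trans)
qed

section \<open>Spanning trees and minimal spanning trees\<close>

lemma spanning_tree_subset: "is_spanning_tree P T \<Longrightarrow> T \<subseteq> complete_edges P"
  unfolding is_spanning_tree_def by (elim conjE)

lemma spanning_tree_connects: "is_spanning_tree P T \<Longrightarrow> connects T P"
  unfolding is_spanning_tree_def connects_def by (elim conjE)

lemma spanning_tree_bridge:
  "is_spanning_tree P T \<Longrightarrow> {x, y} \<in> T \<Longrightarrow> \<not> joined (T - {{x, y}}) x y"
  unfolding is_spanning_tree_def by simp

lemma finite_spanning_tree: "is_spanning_tree P T \<Longrightarrow> finite P \<Longrightarrow> finite T"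
  using finite_subset[OF spanning_tree_subset finite_complete_edges] .

lemma connected_subgraph_contains_spanning_tree:
  assumes "finite H" "H \<subseteq> complete_edges P" "connects H P"
  obtains T where "T \<subseteq> H" "is_spanning_tree P T"
proof -
  obtain T where T: "T \<subseteq> H" "connects T P"
    and min: "\<And>T'. T' \<subseteq> H \<Longrightarrow> connects T' P \<Longrightarrow> card T \<le> card T'"
    using ex_has_least_nat[of "\<lambda>T. T \<subseteq> H \<and> connects T P" H card] assms(3) by auto
  have "\<not> joined (T - {{x, y}}) x y" if "{x, y} \<in> T" for x y
  proof
    assume xy: "joined (T - {{x, y}}) x y"
    have "joined (T - {{x, y}}) u v" if "{u, v} \<in> T" for u v
    proof (cases "{u, v} = {x, y}")
      case True
      then show ?thesis using xy joined_sym by (metis doubleton_eq_iff)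
    next
      case False
      then show ?thesis using that by (intro joined_edge) simp
    qed
    then have "connects (T - {{x, y}}) P"
      using T(2) joined_subgraphI unfolding connects_def by metis
    moreover have "card (T - {{x, y}}) < card T"
      using \<open>{x, y} \<in> T\<close> finite_subset[OF T(1) assms(1)] by (rule card_Diff1_less[rotated])
    ultimately show False using min[of "T - {{x, y}}"] T(1) by auto
  qed
  then have "is_spanning_tree P T"
    using T assms(2) unfolding is_spanning_tree_def connects_def by auto
  with T(1) show thesis by (rule that)
qed

lemma tree_weight_le_subgraph:
  assumes "finite H" "T \<subseteq> H" "H \<subseteq> complete_edges P"
  shows "tree_weight T \<le> tree_weight H"
  unfolding tree_weight_def
proof (rule sum_mono2[OF assms(1,2)])
  fix e assume "e \<in> H - T"
  with assms(3) show "0 \<le> edge_len e" by auto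
qed

lemma MST_weight_le_connected:
  assumes "is_MST P T" "finite P" "H \<subseteq> complete_edges P" "connects H P"
  shows "tree_weight T \<le> tree_weight H"
proof -
  have H: "finite H" using finite_subset[OF assms(3) finite_complete_edges[OF assms(2)]] .
  obtain T' where "T' \<subseteq> H" "is_spanning_tree P T'"
    using connected_subgraph_contains_spanning_tree[OF H assms(3,4)] .
  then have "tree_weight T \<le> tree_weight T'"
    using assms(1) unfolding is_MST_def by (elim conjE allE impE)
  also have "\<dots> \<le> tree_weight H" using tree_weight_le_subgraph[OF H \<open>T' \<subseteq> H\<close> assms(3)] .
  finally show ?thesis .
qed

lemma connects_complete_edges: "connects (complete_edges P) P"
  unfolding connects_def
proof (intro ballI)
  fix x y assume "x \<in> P" "y \<in> P"
  show "joined (complete_edges P) x y"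
  proof (cases "x = y")
    case False
    with \<open>x \<in> P\<close> \<open>y \<in> P\<close> have "{x, y} \<in> complete_edges P" by blast
    then show ?thesis by (rule joined_edge)
  qed simp
qed

lemma MST_exists:
  assumes "finite P"
  obtains T where "is_MST P T"
proof -
  obtain T0 where "T0 \<subseteq> complete_edges P" "is_spanning_tree P T0"
    using connected_subgraph_contains_spanning_tree[OF finite_complete_edges[OF assms] order_refl
        connects_complete_edges] .
  let ?ST = "{T. is_spanning_tree P T}"
  have "?ST \<subseteq> Pow (complete_edges P)" using spanning_tree_subset by blast
  then have "finite ?ST"
    using finite_complete_edges[OF assms] by (meson finite_Pow_iff finite_subset)
  moreover have "?ST \<noteq> {}" using \<open>is_spanning_tree P T0\<close> by blast
  ultimately have "is_MST P (arg_min_on tree_weight ?ST)"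
    unfolding is_MST_def using arg_min_if_finite[of ?ST tree_weight] by (simp add: not_less)
  then show thesis by (rule that)
qed

lemma spanning_tree_edge_ends:
  assumes "is_spanning_tree P T" "f \<in> T"
  obtains x y where "f = {x, y}" "x \<in> P" "y \<in> P" "x \<noteq> y"
  using spanning_tree_subset[OF assms(1)] assms(2) by blast

text \<open>Exchange argument: replacing \<open>f\<close> by \<open>{a, b}\<close> keeps the graph connected.\<close>

lemma MST_edge_le_dist:
  assumes M: "is_MST P T" "finite P" and "f \<in> T" "a \<in> P" "b \<in> P"
    and sep: "\<not> joined (T - {f}) a b"
  shows "edge_len f \<le> dist a b"
proof -
  have T: "is_spanning_tree P T" using M(1) unfolding is_MST_def by simp
  obtain x y where f: "f = {x, y}" "x \<in> P" "y \<in> P" "x \<noteq> y"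
    using spanning_tree_edge_ends[OF T \<open>f \<in> T\<close>] .
  define T' where "T' = insert {a, b} (T - {f})"
  have ab: "joined T' a b" "joined T' b a"
    unfolding T'_def by (simp_all add: joined_edge insert_commute)
  have sub: "T - {f} \<subseteq> T'" unfolding T'_def by blast
  have "joined T a b"
    using spanning_tree_connects[OF T] \<open>a \<in> P\<close> \<open>b \<in> P\<close> unfolding connects_def by simp
  then have "joined T' x y"
    using joined_iff_across_edge[OF \<open>joined T a b\<close> sep[unfolded f(1)] sub[unfolded f(1)]] ab(1)
    by simp
  have "joined T' u v" if "{u, v} \<in> T" for u v
  proof (cases "{u, v} = f")
    case True
    then show ?thesis using \<open>joined T' x y\<close> joined_sym unfolding f(1) by (metis doubleton_eq_iff)
  next
    case False
    then show ?thesis using that sub by (intro joined_edge) blast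
  qed
  then have "connects T' P"
    using spanning_tree_connects[OF T] joined_subgraphI unfolding connects_def by metis
  have "T' \<subseteq> complete_edges P"
    using spanning_tree_subset[OF T] \<open>a \<in> P\<close> \<open>b \<in> P\<close> sep unfolding T'_def by auto
  then have "tree_weight T \<le> tree_weight T'"
    using MST_weight_le_connected[OF M] \<open>connects T' P\<close> by blast
  moreover have "{a, b} \<notin> T - {f}" using sep joined_edge by metis
  then have "tree_weight T' = dist a b + tree_weight (T - {f})"
    unfolding T'_def tree_weight_def using finite_spanning_tree[OF T M(2)] by simp
  moreover have "tree_weight T = edge_len f + tree_weight (T - {f})"
    unfolding tree_weight_def using finite_spanning_tree[OF T M(2)] \<open>f \<in> T\<close> by (rule sum.remove)
  ultimately show ?thesis by linarith
qed

lemma spanning_tree_separating_edge: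
  assumes T: "is_spanning_tree P T" and "finite L" "L \<subseteq> T"
    and "joined T a b" "\<not> joined (T - L) a b"
  shows "\<exists>f\<in>L. \<not> joined (T - {f}) a b"
  using \<open>finite L\<close> \<open>L \<subseteq> T\<close> \<open>\<not> joined (T - L) a b\<close>
proof (induction L rule: finite_induct)
  case empty
  with \<open>joined T a b\<close> show ?case by simp
next
  case (insert f L)
  show ?case
  proof (cases "joined (T - L) a b")
    case True
    have "f \<in> T" using insert.prems(1) by simp
    then obtain x y where f: "f = {x, y}" "x \<in> P" "y \<in> P" "x \<noteq> y"
      by (rule spanning_tree_edge_ends[OF T])
    have "T - insert f L = T - L - {{x, y}}" unfolding f(1) by blast
    then have "\<not> joined (T - L - {{x, y}}) a b" using insert.prems(2) by simp
    moreover have "T - L - {{x, y}} \<subseteq> T - {f}" unfolding f(1) by blast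
    moreover have "\<not> joined (T - {f}) x y"
      using spanning_tree_bridge[OF T] insert.prems(1) unfolding f(1) by simp
    ultimately have "\<not> joined (T - {f}) a b" using joined_iff_across_edge[OF True] by simp
    with insert.prems(1) show ?thesis by auto
  next
    case False
    then obtain g where "g \<in> L" "\<not> joined (T - {g}) a b" using insert.IH insert.prems(1) by auto
    then show ?thesis by auto
  qed
qed

lemma MST_cut_edge_le_dist:
  assumes M: "is_MST P T" "finite P" and "L \<subseteq> T" "a \<in> P" "b \<in> P"
    and "\<not> joined (T - L) a b"
  shows "\<exists>f\<in>L. edge_len f \<le> dist a b"
proof -
  have T: "is_spanning_tree P T" using M(1) unfolding is_MST_def by simp
  have "finite L" using finite_subset[OF \<open>L \<subseteq> T\<close> finite_spanning_tree[OF T M(2)]] .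
  moreover have "joined T a b"
    using spanning_tree_connects[OF T] \<open>a \<in> P\<close> \<open>b \<in> P\<close> unfolding connects_def by simp
  ultimately obtain f where "f \<in> L" "\<not> joined (T - {f}) a b"
    using spanning_tree_separating_edge[OF T _ \<open>L \<subseteq> T\<close> _ \<open>\<not> joined (T - L) a b\<close>] by metis
  moreover have "f \<in> T" using \<open>f \<in> L\<close> \<open>L \<subseteq> T\<close> by blast
  ultimately show ?thesis using MST_edge_le_dist[OF M _ \<open>a \<in> P\<close> \<open>b \<in> P\<close>] by blast
qed

definition component_reps :: "'a set set \<Rightarrow> 'a set \<Rightarrow> 'a set \<Rightarrow> bool" where
  "component_reps G P R \<longleftrightarrow> R \<subseteq> P \<and> (\<forall>a\<in>R. \<forall>b\<in>R. joined G a b \<longrightarrow> a = b) \<and>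
     (\<forall>p\<in>P. \<exists>r\<in>R. joined G p r)"

text \<open>Deleting a bridge splits one component in two: the end \<open>b\<close> of the bridge that is no longer
  joined to the old representative becomes a new one.\<close>

lemma component_reps_Diff_bridge:
  assumes R: "component_reps G P R" and "{x, y} \<in> G" "x \<in> P" "y \<in> P"
    and bridge: "\<not> joined (G - {{x, y}}) x y"
  obtains z where "z \<notin> R" "component_reps (G - {{x, y}}) P (insert z R)"
proof -
  let ?H = "G - {{x, y}}"
  have H: "joined ?H u v \<Longrightarrow> joined G u v" for u v by (erule joined_mono) blast
  obtain r where r: "r \<in> R" "joined G x r" using R \<open>x \<in> P\<close> unfolding component_reps_def by blast
  obtain a b where ab: "{a, b} = {x, y}" "b \<in> P" "joined ?H a r"
  proof (cases "joined ?H x r")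
    case True
    then show thesis using that[of x y] \<open>y \<in> P\<close> by simp
  next
    case False
    then have "joined ?H y r"
      using joined_Diff_edge[OF joined_sym[OF r(2)], of x y] joined_sym
      by (metis rtrancl.rtrancl_refl)
    then show thesis using that[of y x] \<open>x \<in> P\<close> by (simp add: insert_commute)
  qed
  have not_ab: "\<not> joined ?H a b" using bridge ab(1) joined_sym by (metis doubleton_eq_iff)
  have "joined G b r"
    using joined_edge[where G = G and u = b and v = a] \<open>{x, y} \<in> G\<close> ab(1) H[OF ab(3)]
    by (metis insert_commute rtrancl_trans)
  then have b_rep: "v = r" if "v \<in> R" "joined G b v" for v
    using R r(1) that joined_sym unfolding component_reps_def by (metis rtrancl_trans)
  have "b \<notin> R" using b_rep[of b] not_ab ab(3) by auto
  moreover have "component_reps ?H P (insert b R)"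
    unfolding component_reps_def
  proof (intro conjI ballI impI)
    show "insert b R \<subseteq> P" using R ab(2) unfolding component_reps_def by blast
  next
    fix u v assume "u \<in> insert b R" "v \<in> insert b R" "joined ?H u v"
    then show "u = v"
      using R H b_rep not_ab ab(3) joined_sym unfolding component_reps_def
      by (metis insert_iff rtrancl_trans)
  next
    fix p assume "p \<in> P"
    then obtain s where "s \<in> R" "joined G p s" using R unfolding component_reps_def by blast
    then show "\<exists>r\<in>insert b R. joined ?H p r"
      using joined_Diff_edge[where G = G and u = p and v = s and x = x and y = y] ab(1,3) r(1)
        doubleton_eq_iff
      by (metis insert_iff rtrancl_trans)
  qed
  ultimately show thesis by (rule that)
qed

lemma spanning_tree_Diff_component_reps:
  assumes T: "is_spanning_tree P T" and "P \<noteq> {}" "finite P" "L \<subseteq> T"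
  shows "\<exists>R. component_reps (T - L) P R \<and> card R = card L + 1"
proof -
  have "finite L" using finite_subset[OF \<open>L \<subseteq> T\<close> finite_spanning_tree[OF T \<open>finite P\<close>]] .
  then show ?thesis using \<open>L \<subseteq> T\<close>
  proof (induction L rule: finite_induct)
    case empty
    obtain p where "p \<in> P" using \<open>P \<noteq> {}\<close> by blast
    then have "component_reps T P {p}"
      using spanning_tree_connects[OF T] unfolding component_reps_def connects_def by simp
    then show ?case by auto
  next
    case (insert e L)
    then obtain R where R: "component_reps (T - L) P R" "card R = card L + 1" by auto
    have "e \<in> T" using insert.prems by simp
    then obtain x y where e: "e = {x, y}" "x \<in> P" "y \<in> P" "x \<noteq> y"
      by (rule spanning_tree_edge_ends[OF T])
    have "\<not> joined (T - L - {{x, y}}) x y"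
      using spanning_tree_bridge[OF T] \<open>e \<in> T\<close> joined_mono[where G = "T - L - {{x, y}}"]
      unfolding e(1) by blast
    moreover have "{x, y} \<in> T - L" using \<open>e \<in> T\<close> insert.hyps(2) unfolding e(1) by simp
    ultimately obtain z where "z \<notin> R" "component_reps (T - L - {{x, y}}) P (insert z R)"
      using component_reps_Diff_bridge[OF R(1) _ e(2,3)] by metis
    moreover have "T - insert e L = T - L - {{x, y}}" unfolding e(1) by blast
    moreover have "finite R"
      using R(1) \<open>finite P\<close> finite_subset unfolding component_reps_def by blast
    ultimately show ?case using R(2) insert.hyps by (intro exI[of _ "insert z R"]) simp
  qed
qed

text \<open>Induction on \<open>F\<close>: after deleting an edge \<open>{a, b}\<close>, one end, say \<open>a\<close>, still reaches \<open>R\<close>,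
  and adding the other end \<open>b\<close> to \<open>R\<close> restores reachability.\<close>

lemma card_le_card_targets_plus_card_edges:
  assumes "finite F" "F \<subseteq> complete_edges P" "finite R" "\<forall>p\<in>P. \<exists>r\<in>R. joined F p r"
  shows "card P \<le> card R + card F"
  using assms
proof (induction F arbitrary: R rule: finite_induct)
  case empty
  then have "P \<subseteq> R" by auto
  then show ?case using card_mono[OF \<open>finite R\<close>] by simp
next
  case (insert e F)
  obtain x y where e: "e = {x, y}" "x \<in> P" using insert.prems(1) by auto
  obtain r where r: "r \<in> R" "joined (insert e F) x r" using insert.prems(3) e(2) by auto
  have F: "insert e F - {{x, y}} = F" using insert.hyps(2) unfolding e(1) by auto
  have "joined F r x \<or> joined F r y"
    using joined_Diff_edge[OF joined_sym[OF r(2)], of x y] unfolding F by (elim disjE) simp_all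
  then obtain a b where ab: "{a, b} = {x, y}" "joined F a r"
    using joined_sym by (metis insert_commute)
  have "\<forall>p\<in>P. \<exists>s\<in>insert b R. joined F p s"
  proof
    fix p assume "p \<in> P"
    then obtain s where "s \<in> R" "joined (insert e F) p s" using insert.prems(3) by auto
    then have "joined F p s \<or> joined F p a \<or> joined F p b"
      using joined_Diff_edge[of p s "insert e F" x y] ab(1) unfolding F by (metis doubleton_eq_iff)
    then show "\<exists>s\<in>insert b R. joined F p s"
      using \<open>s \<in> R\<close> r(1) rtrancl_trans[OF _ ab(2)] by blast
  qed
  then have "card P \<le> card (insert b R) + card F"
    using insert.IH insert.prems(1,2) by simp
  also have "\<dots> \<le> card R + card (insert e F)"
    using insert.hyps \<open>finite R\<close> by (simp add: card_insert_if)
  finally show ?case .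
qed

lemma card_le_Suc_card_spanning_tree:
  assumes "is_spanning_tree P T" "finite P"
  shows "card P \<le> card T + 1"
proof (cases "P = {}")
  case False
  then obtain p where "p \<in> P" by blast
  then have "\<forall>q\<in>P. \<exists>r\<in>{p}. joined T q r"
    using spanning_tree_connects[OF assms(1)] unfolding connects_def by simp
  with card_le_card_targets_plus_card_edges[OF finite_spanning_tree[OF assms]
      spanning_tree_subset[OF assms(1)], of "{p}"]
  show ?thesis by simp
qed simp

section \<open>Packings and the box-counting ratio\<close>

definition is_packing :: "'a::metric_space set \<Rightarrow> real \<Rightarrow> 'a set \<Rightarrow> bool" where
  "is_packing S \<epsilon> A \<longleftrightarrow> finite A \<and> A \<subseteq> S \<and> (\<forall>x\<in>A. \<forall>y\<in>A. x \<noteq> y \<longrightarrow> ball x \<epsilon> \<inter> ball y \<epsilon> = {})"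

lemma packing_number_eq_SUP:
  "packing_number S \<epsilon> = (SUP A\<in>{A. is_packing S \<epsilon> A}. enat (card A))"
  unfolding packing_number_def is_packing_def by (simp only: setcompr_eq_image)

lemma card_le_packing_number: "is_packing S \<epsilon> A \<Longrightarrow> enat (card A) \<le> packing_number S \<epsilon>"
  unfolding packing_number_eq_SUP by (rule SUP_upper) simp

lemma packing_number_le_iff:
  "packing_number S \<epsilon> \<le> n \<longleftrightarrow> (\<forall>A. is_packing S \<epsilon> A \<longrightarrow> enat (card A) \<le> n)"
  unfolding packing_number_eq_SUP by (simp add: SUP_le_iff)

lemma is_packingI_dist:
  assumes "finite A" "A \<subseteq> S" "\<And>x y. x \<in> A \<Longrightarrow> y \<in> A \<Longrightarrow> x \<noteq> y \<Longrightarrow> 2 * \<epsilon> \<le> dist x y"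
  shows "is_packing S \<epsilon> A"
  using assms unfolding is_packing_def by (smt (verit) disjoint_ballI)

lemma is_packing_dist_ge:
  assumes "is_packing S \<epsilon> A" "x \<in> A" "y \<in> A" "x \<noteq> y" "0 < \<epsilon>"
  shows "\<epsilon> \<le> dist x y"
proof (rule ccontr)
  assume "\<not> \<epsilon> \<le> dist x y"
  then have "x \<in> ball x \<epsilon> \<inter> ball y \<epsilon>" using \<open>0 < \<epsilon>\<close> by (simp add: dist_commute)
  with assms(1-4) show False unfolding is_packing_def by blast
qed

lemma packing_number_antimono:
  assumes "0 < \<epsilon>" "\<epsilon> \<le> \<epsilon>'"
  shows "packing_number S \<epsilon>' \<le> packing_number S \<epsilon>"
proof -
  have "is_packing S \<epsilon> A" if "is_packing S \<epsilon>' A" for A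
    using that subset_ball[OF assms(2)] unfolding is_packing_def by blast
  then show ?thesis unfolding packing_number_le_iff using card_le_packing_number by blast
qed

lemma one_le_packing_number:
  assumes "x \<in> S"
  shows "1 \<le> packing_number S \<epsilon>"
proof -
  have "is_packing S \<epsilon> {x}" using assms unfolding is_packing_def by simp
  then show ?thesis using card_le_packing_number by (fastforce simp: one_enat_def)
qed

lemma is_packing_insert:
  assumes "is_packing S \<epsilon> A" "z \<in> S" "\<And>a. a \<in> A \<Longrightarrow> 2 * \<epsilon> \<le> dist a z"
  shows "is_packing S \<epsilon> (insert z A)"
proof -
  have "ball a \<epsilon> \<inter> ball z \<epsilon> = {}" if "a \<in> A" for a
    using assms(3)[OF that] by (intro disjoint_ballI) simp
  then show ?thesis using assms(1,2) unfolding is_packing_def by (auto simp: Int_commute)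
qed

text \<open>Greedy construction: an unbounded set is not covered by the bounded \<open>2 \<epsilon>\<close>-neighbourhood of
  a finite packing, so every packing can be enlarged.\<close>

lemma packing_number_infinite_if_unbounded:
  assumes "\<not> bounded S" "0 < \<epsilon>"
  shows "packing_number S \<epsilon> = \<infinity>"
proof -
  have "\<exists>A. is_packing S \<epsilon> A \<and> card A = n" for n
  proof (induction n)
    case 0
    have "is_packing S \<epsilon> {}" unfolding is_packing_def by simp
    then show ?case by (intro exI[of _ "{}"]) simp
  next
    case (Suc n)
    then obtain A where A: "is_packing S \<epsilon> A" "card A = n" by blast
    then have "finite A" unfolding is_packing_def by simp
    then have "bounded (\<Union>a\<in>A. ball a (2 * \<epsilon>))" by (simp add: bounded_UN)
    then have "\<not> S \<subseteq> (\<Union>a\<in>A. ball a (2 * \<epsilon>))" using assms(1) bounded_subset by blast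
    then obtain z where "z \<in> S" "z \<notin> (\<Union>a\<in>A. ball a (2 * \<epsilon>))" by blast
    then have z: "z \<in> S" "\<And>a. a \<in> A \<Longrightarrow> 2 * \<epsilon> \<le> dist a z" by (auto simp: not_less)
    then have "z \<notin> A" using assms(2) by fastforce
    then show ?case
      using is_packing_insert[OF A(1) z] A(2) \<open>finite A\<close> by (intro exI[of _ "insert z A"]) simp
  qed
  then have n: "enat n \<le> packing_number S \<epsilon>" for n using card_le_packing_number by metis
  show ?thesis
  proof (cases "packing_number S \<epsilon>")
    case (enat k)
    then show ?thesis using n[of "Suc k"] by simp
  qed simp
qed

lemma packing_number_le_real:
  assumes "\<And>A. is_packing S \<epsilon> A \<Longrightarrow> real (card A) \<le> B"
  obtains n where "packing_number S \<epsilon> = enat n" "real n \<le> B"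
proof -
  have "0 \<le> B" using assms[of "{}"] unfolding is_packing_def by simp
  have "packing_number S \<epsilon> \<le> enat (nat \<lfloor>B\<rfloor>)"
    unfolding packing_number_le_iff using assms by (simp add: le_nat_floor)
  then obtain n where "packing_number S \<epsilon> = enat n" "n \<le> nat \<lfloor>B\<rfloor>"
    by (cases "packing_number S \<epsilon>") auto
  moreover have "real (nat \<lfloor>B\<rfloor>) \<le> B" using \<open>0 \<le> B\<close> by linarith
  ultimately show thesis using that by force
qed

lemma ln_ratio_le_iff:
  fixes x \<epsilon> t :: real
  assumes "0 < \<epsilon>" "\<epsilon> < 1" "0 < x"
  shows "ln x / ln (1 / \<epsilon>) \<le> t \<longleftrightarrow> x \<le> \<epsilon> powr -t"
proof -
  have "0 < ln (1 / \<epsilon>)" using assms by simp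
  moreover have "ln (\<epsilon> powr -t) = t * ln (1 / \<epsilon>)" using assms by (simp add: ln_powr ln_div)
  moreover have "x \<le> \<epsilon> powr -t \<longleftrightarrow> ln x \<le> ln (\<epsilon> powr -t)"
    using assms by (intro ln_le_cancel_iff[symmetric]) simp_all
  ultimately show ?thesis by (simp add: pos_divide_le_eq)
qed

lemma ln_ratio_less_iff:
  fixes x \<epsilon> t :: real
  assumes "0 < \<epsilon>" "\<epsilon> < 1" "0 < x"
  shows "ln x / ln (1 / \<epsilon>) < t \<longleftrightarrow> x < \<epsilon> powr -t"
proof -
  have "0 < ln (1 / \<epsilon>)" using assms by simp
  moreover have "ln (\<epsilon> powr -t) = t * ln (1 / \<epsilon>)" using assms by (simp add: ln_powr ln_div)
  moreover have "x < \<epsilon> powr -t \<longleftrightarrow> ln x < ln (\<epsilon> powr -t)"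
    using assms by (intro ln_less_cancel_iff[symmetric]) simp_all
  ultimately show ?thesis by (simp add: pos_divide_less_eq)
qed

lemma box_ratio_le_iff:
  assumes "0 < \<epsilon>" "\<epsilon> < 1" "packing_number S \<epsilon> = enat n" "n \<noteq> 0"
  shows "box_ratio S \<epsilon> \<le> ereal t \<longleftrightarrow> real n \<le> \<epsilon> powr -t"
  using assms ln_ratio_le_iff[of \<epsilon> "real n" t] unfolding box_ratio_def by simp

lemma box_ratio_less_iff:
  assumes "0 < \<epsilon>" "\<epsilon> < 1" "packing_number S \<epsilon> = enat n" "n \<noteq> 0"
  shows "box_ratio S \<epsilon> < ereal t \<longleftrightarrow> real n < \<epsilon> powr -t"
  using assms ln_ratio_less_iff[of \<epsilon> "real n" t] unfolding box_ratio_def by simp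

lemma dim_Box_nonneg: "0 \<le> dim_Box S"
  unfolding dim_Box_def
proof (rule le_Limsup)
  show "\<forall>\<^sub>F \<epsilon> in at_right 0. 0 \<le> box_ratio S \<epsilon>"
    unfolding eventually_at_right_field
  proof (intro exI[of _ 1] conjI allI impI)
    fix \<epsilon> :: real assume "0 < \<epsilon>" "\<epsilon> < 1"
    then have "0 < ln (1 / \<epsilon>)" by simp
    moreover have "0 \<le> ln (real n)" for n by (cases n) auto
    ultimately show "0 \<le> box_ratio S \<epsilon>"
      unfolding box_ratio_def by (simp split: enat.split)
  qed simp
qed simp

lemma bounded_if_box_ratio_less:
  assumes "\<forall>\<^sub>F \<epsilon> in at_right 0. box_ratio S \<epsilon> < ereal q"
  shows "bounded S"
proof -
  obtain \<epsilon> :: real where "0 < \<epsilon>" "box_ratio S \<epsilon> < ereal q"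
    using eventually_happens'[OF _ eventually_conj[OF assms eventually_at_right_less]] by auto
  show ?thesis
  proof (rule ccontr)
    assume "\<not> bounded S"
    then have "packing_number S \<epsilon> = \<infinity>" using \<open>0 < \<epsilon>\<close> by (rule packing_number_infinite_if_unbounded)
    with \<open>box_ratio S \<epsilon> < ereal q\<close> show False unfolding box_ratio_def by simp
  qed
qed

lemma packing_number_le_powr_if_box_ratio_less:
  assumes "S \<noteq> {}" "0 < \<epsilon>" "\<epsilon> < 1" "box_ratio S \<epsilon> < ereal q"
  obtains n where "packing_number S \<epsilon> = enat n" "real n \<le> \<epsilon> powr -q"
proof -
  obtain n where n: "packing_number S \<epsilon> = enat n"
    using assms(4) unfolding box_ratio_def by (cases "packing_number S \<epsilon>") auto
  moreover have "n \<noteq> 0"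
    using one_le_packing_number[of _ S \<epsilon>] assms(1) n by (force simp: one_enat_def)
  ultimately show thesis
    using that assms(4) box_ratio_less_iff[OF assms(2,3)] by (metis less_imp_le)
qed

text \<open>Below some \<open>\<epsilon>\<^sub>0\<close> the bound \<open>N(\<epsilon>) \<le> \<epsilon>\<^sup>-\<^sup>q\<close> is the hypothesis; on \<open>[\<epsilon>\<^sub>0, D]\<close> the packing number
  is at most \<open>N(\<epsilon>\<^sub>0)\<close>, a constant.\<close>

lemma packing_number_powr_bound:
  assumes "S \<noteq> {}" "0 < q" "0 < D" "\<forall>\<^sub>F \<epsilon> in at_right 0. box_ratio S \<epsilon> < ereal q"
  obtains A where "0 < A"
    "\<And>\<epsilon>. 0 < \<epsilon> \<Longrightarrow> \<epsilon> \<le> D \<Longrightarrow> \<exists>n. packing_number S \<epsilon> = enat n \<and> real n \<le> A * \<epsilon> powr -q"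
proof -
  obtain b where "0 < b" and b: "\<And>\<epsilon>. 0 < \<epsilon> \<Longrightarrow> \<epsilon> < b \<Longrightarrow> box_ratio S \<epsilon> < ereal q"
    using assms(4) unfolding eventually_at_right_field by auto
  define \<epsilon>\<^sub>0 where "\<epsilon>\<^sub>0 = min (b / 2) (1 / 2)"
  have "0 < \<epsilon>\<^sub>0" "\<epsilon>\<^sub>0 < b" "\<epsilon>\<^sub>0 < 1" unfolding \<epsilon>\<^sub>0_def using \<open>0 < b\<close> by auto
  have small: "\<exists>n. packing_number S \<epsilon> = enat n \<and> real n \<le> \<epsilon> powr -q"
    if "0 < \<epsilon>" "\<epsilon> \<le> \<epsilon>\<^sub>0" for \<epsilon>
    using packing_number_le_powr_if_box_ratio_less[OF assms(1) \<open>0 < \<epsilon>\<close>, of q] b that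
      \<open>\<epsilon>\<^sub>0 < b\<close> \<open>\<epsilon>\<^sub>0 < 1\<close>
    by (metis order_le_less_trans)
  obtain K where K: "packing_number S \<epsilon>\<^sub>0 = enat K" using small[OF \<open>0 < \<epsilon>\<^sub>0\<close>] by auto
  define A where "A = 1 + K * D powr q"
  have "0 < A" unfolding A_def by (simp add: add_pos_nonneg)
  moreover have "\<exists>n. packing_number S \<epsilon> = enat n \<and> real n \<le> A * \<epsilon> powr -q"
    if "0 < \<epsilon>" "\<epsilon> \<le> D" for \<epsilon>
  proof (cases "\<epsilon> \<le> \<epsilon>\<^sub>0")
    case True
    then obtain n where "packing_number S \<epsilon> = enat n" "real n \<le> \<epsilon> powr -q"
      using small \<open>0 < \<epsilon>\<close> by blast
    moreover have "\<epsilon> powr -q \<le> A * \<epsilon> powr -q" unfolding A_def by (simp add: algebra_simps)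
    ultimately show ?thesis by force
  next
    case False
    then have "packing_number S \<epsilon> \<le> enat K"
      using packing_number_antimono[OF \<open>0 < \<epsilon>\<^sub>0\<close>, of \<epsilon> S] K by simp
    then obtain n where n: "packing_number S \<epsilon> = enat n" "n \<le> K"
      by (cases "packing_number S \<epsilon>") auto
    have "1 \<le> (D / \<epsilon>) powr q" using that assms(2) by (simp add: ge_one_powr_ge_zero)
    then have "real K \<le> K * (D / \<epsilon>) powr q" using mult_left_mono[of 1 _ "real K"] by simp
    also have "\<dots> = K * D powr q * \<epsilon> powr -q"
      using that assms(3) by (simp add: powr_divide powr_minus_divide)
    also have "\<dots> \<le> A * \<epsilon> powr -q" unfolding A_def by (simp add: algebra_simps)
    finally show ?thesis using n by force
  qed
  ultimately show thesis using that by blast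
qed

section \<open>MST energies versus packing numbers\<close>

lemma card_long_MST_edges_le_packing_number:
  assumes M: "is_MST P T" "finite P" and "P \<subseteq> S" "0 < r"
  shows "enat (card {e\<in>T. r \<le> edge_len e}) \<le> packing_number S (r / 2)"
proof (cases "P = {}")
  case True
  have "T = {}"
    using M(1) spanning_tree_subset True unfolding is_MST_def by fastforce
  then show ?thesis by (simp add: zero_enat_def[symmetric])
next
  case False
  let ?L = "{e\<in>T. r \<le> edge_len e}"
  have T: "is_spanning_tree P T" using M(1) unfolding is_MST_def by simp
  obtain R where R: "component_reps (T - ?L) P R" "card R = card ?L + 1"
    using spanning_tree_Diff_component_reps[OF T False M(2), of ?L] by blast
  have "R \<subseteq> P" using R(1) unfolding component_reps_def by simp
  have "r \<le> dist a b" if ab: "a \<in> R" "b \<in> R" "a \<noteq> b" for a b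
  proof -
    have "\<not> joined (T - ?L) a b" using R(1) ab unfolding component_reps_def by blast
    then obtain f where "f \<in> ?L" "edge_len f \<le> dist a b"
      using MST_cut_edge_le_dist[OF M, of ?L a b] ab \<open>R \<subseteq> P\<close> by blast
    then show ?thesis by simp
  qed
  then have "is_packing S (r / 2) R"
    using \<open>R \<subseteq> P\<close> \<open>P \<subseteq> S\<close> finite_subset[OF \<open>R \<subseteq> P\<close> M(2)] by (intro is_packingI_dist) auto
  then have "enat (card R) \<le> packing_number S (r / 2)" by (rule card_le_packing_number)
  moreover have "enat (card ?L) \<le> enat (card R)" using R(2) by simp
  ultimately show ?thesis by (rule order_trans[rotated])
qed

definition MST_energy_bounded :: "'a::metric_space set \<Rightarrow> real \<Rightarrow> real \<Rightarrow> bool" where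
  "MST_energy_bounded S d C \<longleftrightarrow> (\<forall>P T. finite P \<and> P \<subseteq> S \<and> is_MST P T \<longrightarrow> E_pow d T \<le> C)"

lemma card_packing_le_if_MST_energy_bounded:
  assumes "MST_energy_bounded S d C" "is_packing S \<epsilon> A" "0 < \<epsilon>" "0 \<le> d"
  shows "real (card A) \<le> C * \<epsilon> powr -d + 1"
proof -
  have A: "finite A" "A \<subseteq> S" using assms(2) unfolding is_packing_def by simp_all
  obtain T where M: "is_MST A T" using MST_exists[OF A(1)] .
  then have T: "is_spanning_tree A T" unfolding is_MST_def by simp
  have "\<epsilon> powr d \<le> edge_len e powr d" if "e \<in> T" for e
  proof -
    obtain x y where "e = {x, y}" "x \<in> A" "y \<in> A" "x \<noteq> y"
      using spanning_tree_edge_ends[OF T \<open>e \<in> T\<close>] .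
    then show ?thesis
      using is_packing_dist_ge[OF assms(2)] assms(3,4) by (simp add: powr_mono2)
  qed
  then have "real (card T) * \<epsilon> powr d \<le> E_pow d T"
    unfolding E_pow_def by (rule sum_bounded_below)
  also have "\<dots> \<le> C" using assms(1) A M unfolding MST_energy_bounded_def by blast
  finally have "real (card T) \<le> C * \<epsilon> powr -d"
    using assms(3) by (simp add: powr_minus_divide pos_le_divide_eq)
  moreover have "card A \<le> card T + 1" using card_le_Suc_card_spanning_tree[OF T A(1)] .
  ultimately show ?thesis by linarith
qed

lemma dim_Box_le_if_MST_energy_bounded:
  assumes "S \<noteq> {}" "0 \<le> d" "MST_energy_bounded S d C"
  shows "dim_Box S \<le> ereal d"
proof (rule ereal_le_epsilon2)
  fix g :: real assume "0 < g"
  have "\<forall>\<^sub>F \<epsilon> in at_right 0. C + 1 \<le> \<epsilon> powr -g" using \<open>0 < g\<close> by real_asymp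
  moreover have "\<forall>\<^sub>F \<epsilon> in at_right 0. 0 < (\<epsilon>::real)" by (rule eventually_at_right_less)
  moreover have "\<forall>\<^sub>F \<epsilon> in at_right 0. \<epsilon> < (1::real)" by real_asymp
  ultimately have "\<forall>\<^sub>F \<epsilon> in at_right 0. box_ratio S \<epsilon> \<le> ereal (d + g)"
  proof eventually_elim
    case (elim \<epsilon>)
    obtain n where n: "packing_number S \<epsilon> = enat n" "real n \<le> C * \<epsilon> powr -d + 1"
      using packing_number_le_real
        card_packing_le_if_MST_energy_bounded[OF assms(3) _ \<open>0 < \<epsilon>\<close> assms(2)]
      by metis
    have "n \<noteq> 0" using one_le_packing_number[of _ S \<epsilon>] assms(1) n(1) by (force simp: one_enat_def)
    have "1 \<le> \<epsilon> powr -d"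
      using powr_mono'[of "-d" 0 \<epsilon>] \<open>0 < \<epsilon>\<close> \<open>\<epsilon> < 1\<close> assms(2) by simp
    then have "C * \<epsilon> powr -d + 1 \<le> (C + 1) * \<epsilon> powr -d" by (simp add: algebra_simps)
    also have "\<dots> \<le> \<epsilon> powr -g * \<epsilon> powr -d" using elim by (simp add: mult_right_mono)
    also have "\<dots> = \<epsilon> powr -(d + g)" by (simp add: powr_add[symmetric] add.commute)
    finally show ?case
      using n box_ratio_le_iff[OF \<open>0 < \<epsilon>\<close> \<open>\<epsilon> < 1\<close> n(1) \<open>n \<noteq> 0\<close>] by simp
  qed
  then show "dim_Box S \<le> ereal d + ereal g" unfolding dim_Box_def by (simp add: Limsup_bounded)
qed

text \<open>If at most \<open>A r\<^sup>-\<^sup>q\<close> of the numbers \<open>x e\<close> are \<open>\<ge> r\<close>, then the \<open>j\<close>-th largest of them is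
  at most \<open>(A / real j) powr (1 / q)\<close>.\<close>

lemma sum_powr_le_of_tail_count:
  fixes x :: "'b \<Rightarrow> real"
  assumes "finite T" "\<forall>e\<in>T. 0 < x e" "0 < q" "0 \<le> d"
    and "\<forall>r>0. real (card {e\<in>T. r \<le> x e}) \<le> A * r powr -q"
  shows "(\<Sum>e\<in>T. x e powr d) \<le> (\<Sum>j=1..card T. (A / real j) powr (d / q))"
  using assms(1,2,5)
proof (induction "card T" arbitrary: T)
  case (Suc n)
  then have "T \<noteq> {}" by auto
  then obtain e where e: "e \<in> T" "\<forall>f\<in>T. x e \<le> x f"
    using arg_min_if_finite[OF \<open>finite T\<close>, of x] by (metis not_le)
  have "0 < x e" using e(1) Suc.prems(2) by blast
  have "{f\<in>T. x e \<le> x f} = T" using e(2) by blast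
  then have "real (Suc n) \<le> A * x e powr -q"
    using Suc.prems(3) \<open>0 < x e\<close> Suc.hyps(2) by force
  then have "x e powr q \<le> A / Suc n"
    using \<open>0 < x e\<close> by (simp add: powr_minus_divide field_simps)
  then have "(x e powr q) powr (d / q) \<le> (A / Suc n) powr (d / q)"
    using assms(3,4) by (intro powr_mono2) simp_all
  then have head: "x e powr d \<le> (A / Suc n) powr (d / q)"
    using assms(3) by (simp add: powr_powr)
  have "card {f\<in>T - {e}. r \<le> x f} \<le> card {f\<in>T. r \<le> x f}" for r
    using Suc.prems(1) by (intro card_mono) auto
  then have "\<forall>r>0. real (card {f\<in>T - {e}. r \<le> x f}) \<le> A * r powr -q"
    using Suc.prems(3) by (meson of_nat_le_iff order_trans)
  moreover have "n = card (T - {e})" using Suc.hyps(2) Suc.prems(1) e(1) by simp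
  ultimately have tail: "(\<Sum>f\<in>T - {e}. x f powr d) \<le> (\<Sum>j=1..n. (A / real j) powr (d / q))"
    using Suc.hyps(1)[of "T - {e}"] Suc.prems(1,2) by simp
  have "(\<Sum>f\<in>T. x f powr d) = x e powr d + (\<Sum>f\<in>T - {e}. x f powr d)"
    using Suc.prems(1) e(1) by (rule sum.remove)
  also have "\<dots> \<le> (\<Sum>j=1..Suc n. (A / real j) powr (d / q))" using head tail by simp
  finally show ?case using Suc.hyps(2) by simp
qed simp

lemma sum_powr_le_zeta:
  assumes "1 < p" "0 \<le> A"
  shows "(\<Sum>j=1..m. (A / real j) powr p) \<le> A powr p * (\<Sum>n. real n powr -p)"
proof -
  have "(\<Sum>j=1..m. (A / real j) powr p) = A powr p * (\<Sum>j=1..m. real j powr -p)"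
    using assms(2) by (simp add: sum_distrib_left powr_divide powr_minus_divide)
  also have "\<dots> \<le> A powr p * (\<Sum>n. real n powr -p)"
    using assms(1) summable_real_powr_iff[of "-p"]
    by (intro mult_left_mono sum_le_suminf) auto
  finally show ?thesis .
qed

lemma card_long_MST_edges_le_powr:
  assumes "S \<noteq> {}" "0 < q" "\<forall>\<^sub>F \<epsilon> in at_right 0. box_ratio S \<epsilon> < ereal q"
  obtains A where "0 < A" "\<And>P T r. is_MST P T \<Longrightarrow> finite P \<Longrightarrow> P \<subseteq> S \<Longrightarrow> 0 < r \<Longrightarrow>
    real (card {e\<in>T. r \<le> edge_len e}) \<le> A * r powr -q"
proof -
  obtain D0 where D0: "\<forall>x\<in>S. \<forall>y\<in>S. dist x y \<le> D0"
    using bounded_if_box_ratio_less[OF assms(3)] unfolding bounded_two_points by blast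
  define D where "D = max D0 1"
  have "0 < D" and D: "\<And>x y. x \<in> S \<Longrightarrow> y \<in> S \<Longrightarrow> dist x y \<le> D"
    using D0 unfolding D_def by force+
  obtain A where "0 < A" and N: "\<And>\<epsilon>. 0 < \<epsilon> \<Longrightarrow> \<epsilon> \<le> D \<Longrightarrow>
      \<exists>n. packing_number S \<epsilon> = enat n \<and> real n \<le> A * \<epsilon> powr -q"
    using packing_number_powr_bound[OF assms(1,2) \<open>0 < D\<close> assms(3)] by blast
  have "real (card {e\<in>T. r \<le> edge_len e}) \<le> (2 powr q * A) * r powr -q"
    if M: "is_MST P T" "finite P" "P \<subseteq> S" and "0 < r" for P T r
  proof (cases "r \<le> D")
    case True
    obtain n where "packing_number S (r / 2) = enat n" "real n \<le> A * (r / 2) powr -q"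
      using N[of "r / 2"] True \<open>0 < r\<close> by auto
    moreover have "enat (card {e\<in>T. r \<le> edge_len e}) \<le> packing_number S (r / 2)"
      using card_long_MST_edges_le_packing_number[OF M \<open>0 < r\<close>] .
    ultimately have "real (card {e\<in>T. r \<le> edge_len e}) \<le> A * (r / 2) powr -q" by simp
    also have "\<dots> = (2 powr q * A) * r powr -q"
      using \<open>0 < r\<close> by (simp add: powr_divide powr_minus_divide)
    finally show ?thesis .
  next
    case False
    have T: "is_spanning_tree P T" using M(1) unfolding is_MST_def by simp
    have "edge_len e < r" if "e \<in> T" for e
    proof -
      obtain x y where "e = {x, y}" "x \<in> P" "y \<in> P"
        using spanning_tree_edge_ends[OF T \<open>e \<in> T\<close>] by metis
      moreover have "dist x y \<le> D" using D \<open>x \<in> P\<close> \<open>y \<in> P\<close> M(3) by blast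
      ultimately show ?thesis using False by simp
    qed
    then have no_long: "{e\<in>T. r \<le> edge_len e} = {}" by force
    have "0 \<le> (2 powr q * A) * r powr -q" using \<open>0 < A\<close> by simp
    then show ?thesis unfolding no_long by simp
  qed
  moreover have "0 < 2 powr q * A" using \<open>0 < A\<close> by simp
  ultimately show thesis using that by blast
qed

lemma MST_energy_bounded_if_box_ratio_less:
  assumes "S \<noteq> {}" "0 < q" "q < d" "\<forall>\<^sub>F \<epsilon> in at_right 0. box_ratio S \<epsilon> < ereal q"
  shows "\<exists>C. MST_energy_bounded S d C"
proof -
  obtain A where "0 < A" and tail: "\<And>P T r. is_MST P T \<Longrightarrow> finite P \<Longrightarrow> P \<subseteq> S \<Longrightarrow> 0 < r \<Longrightarrow>
      real (card {e\<in>T. r \<le> edge_len e}) \<le> A * r powr -q"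
    using card_long_MST_edges_le_powr[OF assms(1,2,4)] by blast
  have "E_pow d T \<le> A powr (d / q) * (\<Sum>n. real n powr -(d / q))"
    if M: "is_MST P T" "finite P" "P \<subseteq> S" for P T
  proof -
    have T: "is_spanning_tree P T" using M(1) unfolding is_MST_def by simp
    have "0 < edge_len e" if "e \<in> T" for e
      using spanning_tree_edge_ends[OF T \<open>e \<in> T\<close>] by force
    then have "E_pow d T \<le> (\<Sum>j=1..card T. (A / real j) powr (d / q))"
      unfolding E_pow_def using tail[OF M] finite_spanning_tree[OF T M(2)] assms(2,3)
      by (intro sum_powr_le_of_tail_count) auto
    also have "\<dots> \<le> A powr (d / q) * (\<Sum>n. real n powr -(d / q))"
      using assms(2,3) \<open>0 < A\<close> by (intro sum_powr_le_zeta) simp_all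
    finally show ?thesis .
  qed
  then show ?thesis unfolding MST_energy_bounded_def by blast
qed

lemma dim_MST_eq_INF:
  "dim_MST S = (INF d\<in>{d. 0 \<le> d \<and> (\<exists>C. MST_energy_bounded S d C)}. ereal d)"
  unfolding dim_MST_def MST_energy_bounded_def ..

lemma dim_Box_le_dim_MST:
  assumes "S \<noteq> {}"
  shows "dim_Box S \<le> dim_MST S"
  unfolding dim_MST_eq_INF
proof (rule INF_greatest)
  fix d assume "d \<in> {d. 0 \<le> d \<and> (\<exists>C. MST_energy_bounded S d C)}"
  then obtain C where "0 \<le> d" "MST_energy_bounded S d C" by blast
  then show "dim_Box S \<le> ereal d" by (rule dim_Box_le_if_MST_energy_bounded[OF assms])
qed

lemma dim_MST_le_if_dim_Box_less:
  assumes "S \<noteq> {}" "dim_Box S < ereal d"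
  shows "dim_MST S \<le> ereal d"
proof -
  obtain q where q: "dim_Box S < ereal q" "ereal q < ereal d"
    using ereal_dense2[OF assms(2)] by blast
  have "(0::ereal) < ereal q" using dim_Box_nonneg q(1) by (rule le_less_trans)
  then have "0 < q" "q < d" using q(2) by simp_all
  then obtain C where "MST_energy_bounded S d C"
    using MST_energy_bounded_if_box_ratio_less[OF assms(1)]
      Limsup_lessD[OF q(1)[unfolded dim_Box_def]] by blast
  with \<open>0 < q\<close> \<open>q < d\<close> show ?thesis unfolding dim_MST_eq_INF by (intro INF_lower) auto
qed

theorem theorem2:
  fixes S :: "'a::metric_space set"
  assumes "S \<noteq> {}"
  shows "dim_MST S = dim_Box S"
proof (rule antisym)
  show "dim_Box S \<le> dim_MST S" using assms by (rule dim_Box_le_dim_MST)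
  show "dim_MST S \<le> dim_Box S"
  proof (rule dense_ge)
    fix z assume "dim_Box S < z"
    then show "dim_MST S \<le> z" using dim_MST_le_if_dim_Box_less[OF assms] by (cases z) auto
  qed
qed

end
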